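(* In the standing setting below, suppose that $0\le\rho\le\rho_m$ in $\Omega_T$ for some constant $\rho_m>1$. Then for all $(r,t)\in\Omega_T$, $$\frac{|v(r,t)|}{r}\le\beta(\rho_m-1),\qquad |\partial_r v(r,t)|\le 2\beta(\rho_m-1).$$
   Context: Standing setting. Fix constants $L>0$, $0<R_0<L$, $\beta>0$, $T>0$. Let $R\in C^1([0,T))$ with $R(0)=R_0$ and $0<R(t)<L$, and set $\Omega_T=\{(r,t): R(t)\le r\le L,\ 0\le t<T\}$. Let $\rho\ge 0$ be a classical (continuously differentiable) function on $\Omega_T$ (the matrix density), and define the pressure $P(r,t)=P(\rho(r,t))$ where $P(\rho)=\beta(\rho-1)$ for $\rho\ge1$ and $P(\rho)=0$ for $\rho<1$. Let $v(r,t)$ be a classical function on $\Omega_T$ (twice continuously differentiable in $r$) satisfying $\frac1r\partial_r(r\,\partial_r v)-\frac{v}{r^2}=\partial_r P$ for $R(t)<r<L$, with $v(L,t)=0$, $\partial_r v(R(t),t)=P(R(t),t)$, and the free-boundary law $\dot R(t)=v(R(t),t)$. Define $Q(t)=\int_{R(t)}^L y\,P(y,t)\,dy$. *)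

theory Defs
  imports "HOL-Analysis.Analysis"
begin

definition pressure :: "real \<Rightarrow> real \<Rightarrow> real" where
  "pressure \<beta> \<rho> = (if \<rho> \<ge> 1 then \<beta> * (\<rho> - 1) else 0)"

definition OmegaT :: "(real \<Rightarrow> real) \<Rightarrow> real \<Rightarrow> real \<Rightarrow> (real \<times> real) set" where
  "OmegaT R L T = {(r, t). 0 \<le> t \<and> t < T \<and> R t \<le> r \<and> r \<le> L}"

definition classical_on :: "(real \<times> real) set \<Rightarrow> (real \<times> real \<Rightarrow> real) \<Rightarrow> bool" where
  "classical_on S f \<longleftrightarrow> (\<exists>f'. (\<forall>x\<in>S. (f has_derivative blinfun_apply (f' x)) (at x within S))
      \<and> continuous_on S f')"

end

theory Submission
  imports Defs
begin

(* Fix a time t and write a = R t, b = L.  The radial equation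
     v'' + v'/r - v/r^2 = P'
   says exactly that (v' + v/r - P)' = 0, so v' + v/r - P is constant on [a,b]; by the
   boundary condition v'(a) = P(a) the constant is C = v(a)/a.  Hence (r v)' = r (C + P),
   i.e. G(r) = r v(r) - C r^2/2 has derivative r P(r), which lies in [0, r Pm] where
   Pm = beta (rho_m - 1) bounds the pressure.  So G is increasing and G - Pm r^2/2 is
   decreasing.  Comparing G at a and at b (where v(b) = 0) gives -Pm <= C <= 0; comparing
   at a and at r gives a two-sided bound on r v(r).  Elementary algebra then yields
   |v|/r <= Pm and, through v' = C + P - v/r, |v'| <= 2 Pm. *)

lemma pressure_bounds:
  fixes \<beta> \<rho> \<rho>\<^sub>m :: real
  assumes "0 \<le> \<beta>" "1 \<le> \<rho>\<^sub>m" "\<rho> \<le> \<rho>\<^sub>m"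
  shows "0 \<le> pressure \<beta> \<rho> \<and> pressure \<beta> \<rho> \<le> \<beta> * (\<rho>\<^sub>m - 1)"
  using assms by (auto simp: pressure_def intro: mult_left_mono)

lemma continuous_pressure: "continuous_on UNIV (pressure \<beta>)"
proof -
  have "pressure \<beta> = (\<lambda>x. \<beta> * max (x - 1) 0)"
    by (rule ext) (simp add: pressure_def max_def)
  then show ?thesis by (simp add: continuous_intros)
qed

lemma classical_on_imp_continuous_on:
  assumes "classical_on S f"
  shows "continuous_on S f"
  using assms has_derivative_continuous continuous_on_eq_continuous_within
  unfolding classical_on_def by blast

lemma increment_bounds:
  fixes f f' :: "real \<Rightarrow> real" and k u y :: real
  assumes "u \<le> y" and cont: "continuous_on {u..y} f"
    and deriv: "\<And>z. u < z \<Longrightarrow> z < y \<Longrightarrow> (f has_real_derivative f' z) (at z)"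
    and bounds: "\<And>z. u < z \<Longrightarrow> z < y \<Longrightarrow> 0 \<le> f' z \<and> f' z \<le> k * z"
  shows "f u \<le> f y \<and> f y - k * y\<^sup>2 / 2 \<le> f u - k * u\<^sup>2 / 2"
proof
  show "f u \<le> f y"
    using deriv bounds by (intro DERIV_nonneg_imp_increasing_open[OF \<open>u \<le> y\<close> _ cont]) blast
  define h where "h z = f z - k * z\<^sup>2 / 2" for z
  have "continuous_on {u..y} h" unfolding h_def using cont by (intro continuous_intros) auto
  moreover have "(h has_real_derivative f' z - k * z) (at z)" if "u < z" "z < y" for z
    unfolding h_def using deriv[OF that] by (auto intro!: derivative_eq_intros)
  ultimately have "h y \<le> h u"
    using bounds by (intro DERIV_nonpos_imp_decreasing_open[OF \<open>u \<le> y\<close>]) force+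
  then show "f y - k * y\<^sup>2 / 2 \<le> f u - k * u\<^sup>2 / 2" by (simp add: h_def)
qed

lemma interior_real_derivative:
  assumes "\<forall>x\<in>{a..b}. (f has_real_derivative f' x) (at x within {a..b})" "a < x" "x < b"
  shows "(f has_real_derivative f' x) (at x)"
  using assms at_within_Icc_at[of a x b] by (metis atLeastAtMost_iff less_imp_le)

text \<open>First integral of the radial equation: v' + v/r - P is constant on [a,b],
  since the equation says precisely that its derivative vanishes.\<close>
lemma radial_first_integral:
  fixes a b y :: real and v vr vrr P Pr :: "real \<Rightarrow> real"
  assumes ab: "0 < a" "a < b"
    and d1: "\<forall>x\<in>{a..b}. (v has_real_derivative vr x) (at x within {a..b})"
    and d2: "\<forall>x\<in>{a..b}. (vr has_real_derivative vrr x) (at x within {a..b})"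
    and Pc: "continuous_on {a..b} P"
    and Pd: "\<forall>x\<in>{a<..<b}. (P has_real_derivative Pr x) (at x)"
    and eq: "\<forall>x\<in>{a<..<b}. (1/x) * (vr x + x * vrr x) - v x / x\<^sup>2 = Pr x"
    and y: "y \<in> {a..b}"
  shows "vr y + v y / y - P y = vr a + v a / a - P a"
proof -
  define w where "w x = vr x + v x / x - P x" for x
  have "continuous_on {a..b} v" "continuous_on {a..b} vr"
    using d1 d2 by (auto intro: DERIV_continuous_on)
  then have "continuous_on {a..b} w"
    unfolding w_def using Pc ab by (intro continuous_intros) auto
  moreover have "(w has_real_derivative 0) (at x)" if x: "a < x" "x < b" for x
  proof -
    have "(w has_real_derivative vrr x + (vr x * x - v x * 1) / (x * x) - Pr x) (at x)"
      unfolding w_def using interior_real_derivative[OF d1] interior_real_derivative[OF d2] Pd x ab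
      by (intro derivative_eq_intros) (auto simp: power2_eq_square)
    moreover have "vrr x + (vr x * x - v x * 1) / (x * x) - Pr x = 0"
    proof -
      have "x \<noteq> 0" using x ab by simp
      then have "vrr x + (vr x * x - v x * 1) / (x * x) - Pr x
                 = (1/x) * (vr x + x * vrr x) - v x / x\<^sup>2 - Pr x"
        by (simp add: field_simps power2_eq_square)
      then show ?thesis using eq x by auto
    qed
    ultimately show ?thesis by simp
  qed
  ultimately have "w y = w a" using y ab by (intro DERIV_isconst2) auto
  then show ?thesis by (simp add: w_def)
qed

lemma velocity_bounds_algebra:
  fixes a x C q p Pm :: real
  assumes "0 < a" "a \<le> x" "C \<le> 0" "- C \<le> Pm" "0 \<le> p" "p \<le> Pm"
    and lo: "C * (x\<^sup>2 + a\<^sup>2) / 2 \<le> x\<^sup>2 * q"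
    and hi: "x\<^sup>2 * q \<le> C * (x\<^sup>2 + a\<^sup>2) / 2 + Pm * (x\<^sup>2 - a\<^sup>2) / 2"
  shows "\<bar>q\<bar> \<le> Pm \<and> \<bar>C + p - q\<bar> \<le> 2 * Pm"
proof -
  have x2: "0 < x\<^sup>2" using assms by simp
  have a2: "0 \<le> a\<^sup>2" "a\<^sup>2 \<le> x\<^sup>2" using assms by (auto intro: power_mono)
  have "x\<^sup>2 * (- Pm) \<le> x\<^sup>2 * C" using \<open>- C \<le> Pm\<close> x2 by (intro mult_left_mono) auto
  also have "\<dots> \<le> C * (x\<^sup>2 + a\<^sup>2) / 2"
    using a2 \<open>C \<le> 0\<close> by (simp add: field_simps mult_left_mono_neg)
  finally have "x\<^sup>2 * (- Pm) \<le> x\<^sup>2 * q" using lo by linarith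
  then have q_lo: "- Pm \<le> q" using x2 by (simp only: mult_le_cancel_left_pos)
  have "x\<^sup>2 * q \<le> C * (x\<^sup>2 + a\<^sup>2) / 2 + Pm * (x\<^sup>2 + a\<^sup>2) / 2 - Pm * a\<^sup>2"
    using hi by (simp add: field_simps)
  also have "\<dots> \<le> x\<^sup>2 * (C + Pm)"
  proof -
    have "(C + Pm) * a\<^sup>2 \<le> (C + Pm) * x\<^sup>2" using a2 assms by (intro mult_left_mono) auto
    moreover have "0 \<le> Pm * a\<^sup>2" using a2 assms by simp
    ultimately show ?thesis by (simp add: field_simps)
  qed
  finally have q_hi: "q \<le> C + Pm" using x2 by (simp only: mult_le_cancel_left_pos)
  show ?thesis using q_lo q_hi assms by (simp add: abs_le_iff)
qed

lemma radial_velocity_bounds: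
  fixes a b x Pm :: real and v vr vrr P Pr :: "real \<Rightarrow> real"
  assumes ab: "0 < a" "a < b"
    and d1: "\<forall>x\<in>{a..b}. (v has_real_derivative vr x) (at x within {a..b})"
    and d2: "\<forall>x\<in>{a..b}. (vr has_real_derivative vrr x) (at x within {a..b})"
    and Pc: "continuous_on {a..b} P"
    and Pd: "\<forall>x\<in>{a<..<b}. (P has_real_derivative Pr x) (at x)"
    and eq: "\<forall>x\<in>{a<..<b}. (1/x) * (vr x + x * vrr x) - v x / x\<^sup>2 = Pr x"
    and vb: "v b = 0" and va: "vr a = P a"
    and Pb: "\<forall>x\<in>{a..b}. 0 \<le> P x \<and> P x \<le> Pm"
    and x: "x \<in> {a..b}"
  shows "\<bar>v x\<bar> / x \<le> Pm \<and> \<bar>vr x\<bar> \<le> 2 * Pm"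
proof -
  define C where "C = v a / a"
  have vr_eq: "vr y = C + P y - v y / y" if "y \<in> {a..b}" for y
    using radial_first_integral[OF ab d1 d2 Pc Pd eq that] va by (simp add: C_def)
  define G where "G y = y * v y - C * y\<^sup>2 / 2" for y
  have G_cont: "continuous_on {a..b} G"
    unfolding G_def using d1 by (intro continuous_intros DERIV_continuous_on) auto
  have G_deriv: "(G has_real_derivative y * P y) (at y)" if "a < y" "y < b" for y
  proof -
    have "(G has_real_derivative v y + y * vr y - C * y) (at y)"
      unfolding G_def using interior_real_derivative[OF d1 that]
      by (auto intro!: derivative_eq_intros)
    then show ?thesis using vr_eq[of y] that ab by (simp add: field_simps)
  qed
  have G_incr: "G u \<le> G y \<and> G y - Pm * y\<^sup>2 / 2 \<le> G u - Pm * u\<^sup>2 / 2"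
    if "a \<le> u" "u \<le> y" "y \<le> b" for u y
  proof (rule increment_bounds[OF \<open>u \<le> y\<close>])
    show "continuous_on {u..y} G" using G_cont that by (auto elim: continuous_on_subset)
  next
    fix z assume z: "u < z" "z < y"
    then show "(G has_real_derivative z * P z) (at z)" using G_deriv that by auto
    show "0 \<le> z * P z \<and> z * P z \<le> Pm * z"
      using Pb z that ab by (auto simp: mult.commute intro: mult_left_mono)
  qed
  have Ga: "G a = C * a\<^sup>2 / 2" using ab by (simp add: G_def C_def power2_eq_square)
  have Gb: "G b = - C * b\<^sup>2 / 2" using vb by (simp add: G_def)
  have Pm_nonneg: "0 \<le> Pm" using Pb ab by force
  have sq_pos: "0 < a\<^sup>2 + b\<^sup>2" using ab by (simp add: add_pos_pos)
  have "C * (a\<^sup>2 + b\<^sup>2) \<le> 0" using G_incr[of a b] ab Ga Gb by (simp add: algebra_simps)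
  then have C_nonpos: "C \<le> 0" using sq_pos by (simp add: mult_le_0_iff)
  have "- C * (a\<^sup>2 + b\<^sup>2) \<le> Pm * (b\<^sup>2 - a\<^sup>2)" using G_incr[of a b] ab Ga Gb by (simp add: algebra_simps)
  also have "\<dots> \<le> Pm * (a\<^sup>2 + b\<^sup>2)" using Pm_nonneg by (intro mult_left_mono) auto
  finally have C_lower: "- C \<le> Pm" using sq_pos by (simp only: mult_le_cancel_right_pos)
  have x_pos: "0 < x" using x ab by simp
  define q where "q = v x / x"
  have Gx: "G x = x\<^sup>2 * q - C * x\<^sup>2 / 2" using x_pos by (simp add: G_def q_def power2_eq_square)
  have "G a \<le> G x" "G x - Pm * x\<^sup>2 / 2 \<le> G a - Pm * a\<^sup>2 / 2" using G_incr[of a x] x by auto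
  then have "\<bar>q\<bar> \<le> Pm \<and> \<bar>C + P x - q\<bar> \<le> 2 * Pm"
    using x ab C_nonpos C_lower Pb unfolding Ga Gx
    by (intro velocity_bounds_algebra[of a x]) (auto simp: field_simps)
  then show ?thesis using vr_eq[OF x] x_pos by (simp add: q_def)
qed

theorem lemma4p4:
  fixes L R\<^sub>0 \<beta> T \<rho>\<^sub>m :: real
    and R R' :: "real \<Rightarrow> real"
    and \<rho> v vr vrr Pr :: "real \<Rightarrow> real \<Rightarrow> real"
  assumes L_pos: "L > 0" and R0: "0 < R\<^sub>0" "R\<^sub>0 < L" and beta: "\<beta> > 0" and Tpos: "T > 0"
    and R_C1: "\<forall>t\<in>{0..<T}. (R has_real_derivative R' t) (at t within {0..<T})"
    and R'_cont: "continuous_on {0..<T} R'"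
    and R_init: "R 0 = R\<^sub>0"
    and R_bounds: "\<forall>t\<in>{0..<T}. 0 < R t \<and> R t < L"
    and rho_nonneg: "\<forall>(r, t)\<in>OmegaT R L T. \<rho> r t \<ge> 0"
    and rho_classical: "classical_on (OmegaT R L T) (\<lambda>(r, t). \<rho> r t)"
    and v_cont: "continuous_on (OmegaT R L T) (\<lambda>(r, t). v r t)"
    and v_d1: "\<forall>t\<in>{0..<T}. \<forall>r\<in>{R t..L}.
                 ((\<lambda>s. v s t) has_real_derivative vr r t) (at r within {R t..L})"
    and v_d2: "\<forall>t\<in>{0..<T}. \<forall>r\<in>{R t..L}.
                 ((\<lambda>s. vr s t) has_real_derivative vrr r t) (at r within {R t..L})"
    and vrr_cont: "\<forall>t\<in>{0..<T}. continuous_on {R t..L} (\<lambda>s. vrr s t)"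
    and P_deriv: "\<forall>t\<in>{0..<T}. \<forall>r\<in>{R t<..<L}.
                 ((\<lambda>s. pressure \<beta> (\<rho> s t)) has_real_derivative Pr r t) (at r)"
    and v_eq: "\<forall>t\<in>{0..<T}. \<forall>r\<in>{R t<..<L}.
                 (1 / r) * (vr r t + r * vrr r t) - v r t / r\<^sup>2 = Pr r t"
    and v_bdry_L: "\<forall>t\<in>{0..<T}. v L t = 0"
    and v_bdry_R: "\<forall>t\<in>{0..<T}. vr (R t) t = pressure \<beta> (\<rho> (R t) t)"
    and free_bdry: "\<forall>t\<in>{0..<T}. R' t = v (R t) t"
    and rho_m: "\<rho>\<^sub>m > 1"
    and rho_bound: "\<forall>(r, t)\<in>OmegaT R L T. \<rho> r t \<le> \<rho>\<^sub>m"
  shows "\<forall>(r, t)\<in>OmegaT R L T.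
           \<bar>v r t\<bar> / r \<le> \<beta> * (\<rho>\<^sub>m - 1) \<and> \<bar>vr r t\<bar> \<le> 2 * \<beta> * (\<rho>\<^sub>m - 1)"
proof (intro ballI, clarify)
  fix r t assume "(r, t) \<in> OmegaT R L T"
  then have t: "t \<in> {0..<T}" and r: "r \<in> {R t..L}" by (auto simp: OmegaT_def)
  have slice: "(\<lambda>s. (s, t)) ` {R t..L} \<subseteq> OmegaT R L T" using t by (auto simp: OmegaT_def)
  have "continuous_on {R t..L} ((\<lambda>(r, t). \<rho> r t) \<circ> (\<lambda>s. (s, t)))"
    using classical_on_imp_continuous_on[OF rho_classical]
    by (intro continuous_on_compose continuous_intros) (auto elim: continuous_on_subset[OF _ slice])
  then have P_cont: "continuous_on {R t..L} (\<lambda>s. pressure \<beta> (\<rho> s t))"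
    using continuous_on_compose2[OF continuous_pressure] by (simp add: o_def)
  have P_bounds: "\<forall>s\<in>{R t..L}. 0 \<le> pressure \<beta> (\<rho> s t) \<and> pressure \<beta> (\<rho> s t) \<le> \<beta> * (\<rho>\<^sub>m - 1)"
    using rho_bound t beta rho_m by (intro ballI pressure_bounds) (auto simp: OmegaT_def)
  have "\<bar>v r t\<bar> / r \<le> \<beta> * (\<rho>\<^sub>m - 1) \<and> \<bar>vr r t\<bar> \<le> 2 * (\<beta> * (\<rho>\<^sub>m - 1))"
    using R_bounds v_d1 v_d2 P_deriv v_eq v_bdry_L v_bdry_R t
    by (intro radial_velocity_bounds[OF _ _ _ _ P_cont _ _ _ _ P_bounds r]) auto
  then show "\<bar>v r t\<bar> / r \<le> \<beta> * (\<rho>\<^sub>m - 1) \<and> \<bar>vr r t\<bar> \<le> 2 * \<beta> * (\<rho>\<^sub>m - 1)"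
    by (simp add: mult.assoc)
qed

end
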